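(* Let $K_0$ be a finite extension of $\mathbb{Q}_2$ with absolute ramification index $e_0$, and let $K_2/K_0$ be a totally ramified cyclic extension of degree $4$ with Galois group generated by $\sigma$, with intermediate field $K_1$ (the fixed field of $\sigma^2$), whose lower ramification break numbers $b_1<b_2$ are odd with $b_1>e_0$ and $b_2=b_1+2e_0$. Then for every odd integer $a$ there are $\alpha,\rho\in K_2$ with $v_2(\alpha)=a$, $v_2(\rho)=a+(b_2-b_1)$ such that $\mu:=(\sigma+1)\alpha-\rho$ lies in $K_1$ and $v_2(\mu)=a+b_1$. Furthermore, if $a+b_1\equiv 0\pmod 4$, then $\alpha,\rho$ can be chosen so that in addition $\mu\in K_0$.
   Context: $v_2$ is the normalized valuation of $K_2$. The lower ramification break numbers of $\mathrm{Gal}(K_2/K_0)$ are the integers $j\ge1$ with $G_j\ne G_{j+1}$ in the lower-numbering ramification filtration. $(\sigma+1)\alpha=\sigma(\alpha)+\alpha$. *)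

theory Defs
  imports Main
begin

text \<open>Valuations are functions 'k => int; only their values on nonzero elements matter
  (the value 0 plays the role of +infinity and is never consulted).\<close>

definition normalized_discrete_valuation :: "('k::field \<Rightarrow> int) \<Rightarrow> bool" where
  "normalized_discrete_valuation v \<longleftrightarrow>
     (\<forall>x y. x \<noteq> 0 \<longrightarrow> y \<noteq> 0 \<longrightarrow> v (x * y) = v x + v y) \<and>
     (\<forall>x y. x \<noteq> 0 \<longrightarrow> y \<noteq> 0 \<longrightarrow> x + y \<noteq> 0 \<longrightarrow> min (v x) (v y) \<le> v (x + y)) \<and>
     (\<exists>x. x \<noteq> 0 \<and> v x = 1)"

definition val_ring :: "('k::field \<Rightarrow> int) \<Rightarrow> 'k set" where
  "val_ring v = {x. x = 0 \<or> 0 \<le> v x}"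

definition val_ideal :: "('k::field \<Rightarrow> int) \<Rightarrow> 'k set" where
  "val_ideal v = {x. x = 0 \<or> 1 \<le> v x}"

definition residue_field :: "('k::field \<Rightarrow> int) \<Rightarrow> 'k set set" where
  "residue_field v = val_ring v // {(x, y). x \<in> val_ring v \<and> y \<in> val_ring v \<and> x - y \<in> val_ideal v}"

definition val_complete :: "('k::field \<Rightarrow> int) \<Rightarrow> bool" where
  "val_complete v \<longleftrightarrow>
     (\<forall>s :: nat \<Rightarrow> 'k.
        (\<forall>N::int. \<exists>M. \<forall>m\<ge>M. \<forall>n\<ge>M. s m = s n \<or> N \<le> v (s m - s n)) \<longrightarrow>
        (\<exists>L. \<forall>N::int. \<exists>M. \<forall>n\<ge>M. s n = L \<or> N \<le> v (s n - L)))"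

text \<open>A field of characteristic 0, complete for a discrete valuation with finite residue
  field of characteristic 2: exactly the finite extensions of Q_2 (with v their normalized valuation).\<close>
definition two_adic_local_field :: "('k::field_char_0 \<Rightarrow> int) \<Rightarrow> bool" where
  "two_adic_local_field v \<longleftrightarrow>
     normalized_discrete_valuation v \<and> val_complete v \<and>
     finite (residue_field v) \<and> (2::'k) \<in> val_ideal v"

definition field_automorphism :: "('k::field \<Rightarrow> 'k) \<Rightarrow> bool" where
  "field_automorphism s \<longleftrightarrow> bij s \<and> (\<forall>x y. s (x + y) = s x + s y) \<and> (\<forall>x y. s (x * y) = s x * s y)"

definition cyc_group :: "('k \<Rightarrow> 'k) \<Rightarrow> ('k \<Rightarrow> 'k) set" where
  "cyc_group s = {s ^^ k | k. k < (4::nat)}"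

definition lower_ram_group :: "('k::field \<Rightarrow> int) \<Rightarrow> ('k \<Rightarrow> 'k) \<Rightarrow> int \<Rightarrow> ('k \<Rightarrow> 'k) set" where
  "lower_ram_group v s i = {g \<in> cyc_group s. \<forall>x \<in> val_ring v. g x - x = 0 \<or> i + 1 \<le> v (g x - x)}"

definition lower_breaks :: "('k::field \<Rightarrow> int) \<Rightarrow> ('k \<Rightarrow> 'k) \<Rightarrow> int set" where
  "lower_breaks v s = {j. 1 \<le> j \<and> lower_ram_group v s j \<noteq> lower_ram_group v s (j + 1)}"

end

theory Submission
  imports Defs
begin

text \<open>For an automorphism \<open>g\<close> in \<open>{\<sigma>, \<sigma>\<^sup>2}\<close> with lower break \<open>b\<close>, put \<open>dev y = g y / y - 1\<close>. Writing
  \<open>y = c \<pi>\<^sup>j u\<close> with \<open>c \<in> K\<^sub>0\<close> and \<open>u\<close> a unit, \<open>dev\<close> ignores \<open>c\<close>, is small on \<open>u\<close>, and is nearly additive,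
  so \<open>v (dev \<pi>) = b\<close> and \<open>v (g y - y) = v y + b\<close> whenever \<open>v y\<close> is odd. Comparing \<open>\<sigma>\<^sup>2\<pi> / \<pi>\<close>
  with \<open>\<sigma>\<pi> / \<pi>\<close> gives \<open>b\<^sub>1 < 2 e\<^sub>0\<close>, and approximating elements of \<open>K\<^sub>1\<close> by \<open>K\<^sub>0\<close>-multiples of
  powers of \<open>\<pi>\<^sub>1 = \<pi> \<sigma>\<^sup>2\<pi>\<close> shows \<open>v (\<sigma> x - x) \<ge> v x + 2 b\<^sub>1\<close> on \<open>K\<^sub>1\<close>, with equality when
  \<open>v x \<equiv> 2 (mod 4)\<close>.

  For \<open>v \<alpha> = a\<close> odd take \<open>\<rho> = \<theta> (1 - \<sigma>\<^sup>2)(\<sigma> + 1) \<alpha>\<close> with \<open>\<theta> = \<pi> / (\<pi> - \<sigma>\<^sup>2\<pi>)\<close>; as \<open>\<theta> + \<sigma>\<^sup>2\<theta> = 1\<close>, the element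
  \<open>\<mu> = (\<sigma> + 1) \<alpha> - \<rho>\<close> lies in \<open>K\<^sub>1\<close>. In \<open>(1 - \<sigma>\<^sup>2)(\<sigma> + 1) \<alpha>\<close> the term \<open>-2 (\<sigma>\<^sup>2\<alpha> - \<sigma>\<alpha>)\<close>
  dominates, which gives \<open>v \<rho> = a + 2 e\<^sub>0\<close> and \<open>v \<mu> = a + b\<^sub>1\<close>. If \<open>4\<close> divides \<open>a + b\<^sub>1\<close>, the map
  \<open>\<alpha> \<mapsto> \<sigma> \<mu> - \<mu>\<close> is \<open>K\<^sub>0\<close>-linear and has exact valuation at \<open>\<alpha> \<pi>\<^sup>2\<close>, so subtracting a
  \<open>K\<^sub>0\<close>-multiple of \<open>\<alpha> \<pi>\<^sup>2\<close> from \<open>\<alpha>\<close> makes \<open>\<mu>\<close> fixed by \<open>\<sigma>\<close>.\<close>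

text \<open>\<open>x = 0\<close> satisfies \<open>val_ge v x n\<close> for every \<open>n\<close>, \<open>v 0\<close> being a junk value.\<close>

definition val_ge :: "('k::field \<Rightarrow> int) \<Rightarrow> 'k \<Rightarrow> int \<Rightarrow> bool" where
  "val_ge v x n \<longleftrightarrow> x = 0 \<or> n \<le> v x"

locale valued_field =
  fixes v :: "'k::field \<Rightarrow> int"
  assumes val_mult: "x \<noteq> 0 \<Longrightarrow> y \<noteq> 0 \<Longrightarrow> v (x * y) = v x + v y"
    and val_add: "x \<noteq> 0 \<Longrightarrow> y \<noteq> 0 \<Longrightarrow> x + y \<noteq> 0 \<Longrightarrow> min (v x) (v y) \<le> v (x + y)"
begin

abbreviation vge :: "'k \<Rightarrow> int \<Rightarrow> bool" where
  "vge x n \<equiv> val_ge v x n"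

lemma val_one [simp]: "v 1 = 0"
  using val_mult[of 1 1] by simp

lemma val_inverse: "x \<noteq> 0 \<Longrightarrow> v (inverse x) = - v x"
  using val_mult[of x "inverse x"] by simp

lemma val_divide: "x \<noteq> 0 \<Longrightarrow> y \<noteq> 0 \<Longrightarrow> v (x / y) = v x - v y"
  by (simp add: divide_inverse val_mult val_inverse)

lemma val_minus_one [simp]: "v (- 1) = 0"
  using val_mult[of "- 1" "- 1"] by simp

lemma val_minus [simp]: "v (- x) = v x"
  using val_mult[of "- 1" x] by (cases "x = 0") simp_all

lemma val_power: "x \<noteq> 0 \<Longrightarrow> v (x ^ n) = int n * v x"
  by (induction n) (auto simp: val_mult algebra_simps)

lemma vge_zero [simp]: "vge 0 n"
  by (simp add: val_ge_def)

lemma vge_val: "vge x (v x)"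
  by (simp add: val_ge_def)

lemma vge_mono: "vge x m \<Longrightarrow> n \<le> m \<Longrightarrow> vge x n"
  by (auto simp: val_ge_def)

lemma vge_minus [simp]: "vge (- x) n \<longleftrightarrow> vge x n"
  by (simp add: val_ge_def)

lemma vge_commute: "vge (x - y) n \<longleftrightarrow> vge (y - x) n"
  by (metis minus_diff_eq vge_minus)

lemma vge_add: "vge x n \<Longrightarrow> vge y n \<Longrightarrow> vge (x + y) n"
  unfolding val_ge_def using val_add[of x y] by fastforce

lemma vge_diff: "vge x n \<Longrightarrow> vge y n \<Longrightarrow> vge (x - y) n"
  using vge_add[of x n "- y"] by simp

lemma vge_mult: "vge x n \<Longrightarrow> vge y m \<Longrightarrow> vge (x * y) (n + m)"
  unfolding val_ge_def by (cases "x = 0"; cases "y = 0") (auto simp: val_mult)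

lemma vge_mult_val: "vge x n \<Longrightarrow> vge (x * y) (n + v y)"
  using vge_mult[OF _ vge_val] .

lemma vge_divide_val: "vge x n \<Longrightarrow> y \<noteq> 0 \<Longrightarrow> vge (x / y) (n - v y)"
  using vge_mult_val[of x n "inverse y"] by (simp add: divide_inverse val_inverse)

lemma vge_sum: "(\<And>i. i \<in> A \<Longrightarrow> vge (f i) n) \<Longrightarrow> vge (sum f A) n"
  by (induction A rule: infinite_finite_induct) (auto intro: vge_add)

lemma vge_power: "vge x n \<Longrightarrow> vge (x ^ k) (int k * n)"
proof (induction k)
  case (Suc k)
  then show ?case
    using vge_mult[of x n "x ^ k" "int k * n"] by (simp add: algebra_simps)
qed (simp add: val_ge_def)

lemma val_add_dominant:
  assumes "x \<noteq> 0" "vge y (v x + 1)"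
  shows "x + y \<noteq> 0 \<and> v (x + y) = v x"
proof -
  have "vge (x + y) (v x)"
    using assms vge_add[OF vge_val] vge_mono by fastforce
  moreover have "\<not> vge (x + y) (v x + 1)"
    using assms vge_diff[of "x + y" "v x + 1" y] by (auto simp: val_ge_def)
  moreover have "x + y \<noteq> 0"
    using assms by (auto simp: val_ge_def add_eq_0_iff2)
  ultimately show ?thesis by (simp add: val_ge_def)
qed

lemma vge_diff_power:
  assumes "vge x 0" "vge y 0" "vge (x - y) n"
  shows "vge (x ^ N - y ^ N) n"
proof -
  have "vge (y ^ (N - Suc i) * x ^ i) 0" for i
    using vge_mult[OF vge_power[OF assms(2)] vge_power[OF assms(1)]] by simp
  then have "vge (\<Sum>i<N. y ^ (N - Suc i) * x ^ i) 0"
    by (intro vge_sum)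
  then show ?thesis
    unfolding power_diff_sumr2 using vge_mult[OF assms(3)] by fastforce
qed

definition acts_trivially_mod :: "('k \<Rightarrow> 'k) \<Rightarrow> int \<Rightarrow> bool" where
  "acts_trivially_mod g j \<longleftrightarrow> (\<forall>x. vge x 0 \<longrightarrow> vge (g x - x) j)"

lemma acts_trivially_mod_mono:
  "acts_trivially_mod g j \<Longrightarrow> i \<le> j \<Longrightarrow> acts_trivially_mod g i"
  unfolding acts_trivially_mod_def by (meson vge_mono)

lemma lower_ram_group_eq:
  "lower_ram_group v s j = {g \<in> cyc_group s. acts_trivially_mod g (j + 1)}"
  unfolding lower_ram_group_def acts_trivially_mod_def val_ring_def val_ge_def by auto

end

locale finite_residue_char2 = valued_field v for v :: "'k::field \<Rightarrow> int" +
  assumes finite_residue_field: "finite (residue_field v)"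
    and two_in_ideal: "vge 2 1"
begin

lemma square_cancel:
  assumes "vge x 0" "vge y 0" "vge (x ^ 2 - y ^ 2) 1"
  shows "vge (x - y) 1"
proof -
  have "vge (2 * (y * (x - y))) (1 + 0)"
    using vge_mult[OF two_in_ideal vge_mult[OF assms(2) vge_diff[OF assms(1,2)]]] by simp
  then have "vge ((x ^ 2 - y ^ 2) - 2 * (y * (x - y))) 1"
    using vge_diff assms(3) by simp
  moreover have "(x - y) ^ 2 = (x ^ 2 - y ^ 2) - 2 * (y * (x - y))"
    by (simp add: power2_eq_square algebra_simps)
  ultimately have "vge ((x - y) ^ 2) 1"
    by simp
  then show ?thesis
    by (cases "x = y") (auto simp: val_ge_def val_power)
qed

lemma power2_power_cancel:
  "vge x 0 \<Longrightarrow> vge y 0 \<Longrightarrow> vge (x ^ 2 ^ m - y ^ 2 ^ m) 1 \<Longrightarrow> vge (x - y) 1"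
proof (induction m arbitrary: x y)
  case (Suc m)
  have "vge (x ^ 2) 0" "vge (y ^ 2) 0"
    using vge_power[of x 0 2] vge_power[of y 0 2] Suc.prems by auto
  moreover have "vge ((x ^ 2) ^ 2 ^ m - (y ^ 2) ^ 2 ^ m) 1"
    using Suc.prems(3) by (simp add: power_mult[symmetric] mult.commute)
  ultimately show ?case
    using Suc.IH square_cancel Suc.prems by blast
qed simp

lemma exists_power2_power_cong:
  assumes "vge u 0"
  obtains m n where "m < n" "vge (u ^ 2 ^ m - u ^ 2 ^ n) 1"
proof -
  define rel where "rel = {(x, y). x \<in> val_ring v \<and> y \<in> val_ring v \<and> x - y \<in> val_ideal v}"
  define cls where "cls n = rel `` {u ^ 2 ^ n}" for n :: nat
  have integral: "u ^ 2 ^ n \<in> val_ring v" for n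
    using vge_power[OF assms, of "2 ^ n"] by (simp add: val_ring_def val_ge_def)
  have "range cls \<subseteq> residue_field v"
    unfolding residue_field_def cls_def rel_def[symmetric] using integral by (auto intro: quotientI)
  then have "\<not> inj cls"
    using finite_residue_field finite_subset finite_imageD infinite_UNIV_nat by blast
  then obtain m n where "m \<noteq> n" "cls m = cls n"
    unfolding inj_def by blast
  moreover have "vge (u ^ 2 ^ m - u ^ 2 ^ n) 1" if "cls m = cls n" for m n
  proof -
    have "u ^ 2 ^ n \<in> cls m"
      using that integral unfolding cls_def rel_def val_ideal_def by simp
    then show ?thesis
      unfolding cls_def rel_def val_ideal_def val_ge_def by simp
  qed
  ultimately show ?thesis
    using that vge_commute by (metis linorder_neqE_nat)
qed

lemma exists_power2_root:
  assumes "vge u 0"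
  obtains w where "vge w 0" "vge (w ^ 2 ^ r - u) 1"
proof -
  obtain m n where mn: "m < n" "vge (u ^ 2 ^ m - u ^ 2 ^ n) 1"
    using exists_power2_power_cong[OF assms] by blast
  define k where "k = n - m"
  have powers: "vge (u ^ N) 0" for N
    using vge_power[OF assms] by fastforce
  have "u ^ 2 ^ n = (u ^ 2 ^ k) ^ 2 ^ m"
    using mn(1) by (simp add: k_def power_mult[symmetric] power_add[symmetric])
  then have period: "vge (u ^ 2 ^ k - u) 1"
    using power2_power_cancel[OF assms powers] mn(2) vge_commute by metis
  have iterate: "vge (u ^ 2 ^ (j * k) - u) 1" for j
  proof (induction j)
    case (Suc j)
    have "vge ((u ^ 2 ^ (j * k)) ^ 2 ^ k - u ^ 2 ^ k) 1"
      using vge_diff_power[OF powers assms Suc.IH] .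
    moreover have "(u ^ 2 ^ (j * k)) ^ 2 ^ k = u ^ 2 ^ (Suc j * k)"
      by (metis power_add power_mult mult_Suc add.commute)
    ultimately show ?case
      using vge_add[OF _ period] by fastforce
  qed simp
  have "r \<le> r * k"
    using mn(1) by (auto simp: k_def)
  then have "(u ^ 2 ^ (r * k - r)) ^ 2 ^ r = u ^ 2 ^ (r * k)"
    by (simp add: power_mult[symmetric] power_add[symmetric])
  then show ?thesis
    using that[of "u ^ 2 ^ (r * k - r)"] powers iterate[of r] by (simp add: mult.commute)
qed

end

locale valued_field_aut4 = valued_field v for v :: "'k::field_char_0 \<Rightarrow> int" +
  fixes \<sigma> :: "'k \<Rightarrow> 'k"
  assumes sigma_add [simp]: "\<sigma> (x + y) = \<sigma> x + \<sigma> y"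
    and sigma_mult [simp]: "\<sigma> (x * y) = \<sigma> x * \<sigma> y"
    and sigma_inj: "inj \<sigma>"
    and sigma_order4 [simp]: "\<sigma> (\<sigma> (\<sigma> (\<sigma> x))) = x"
    and val_sigma: "x \<noteq> 0 \<Longrightarrow> v (\<sigma> x) = v x"
begin

lemma sigma_zero [simp]: "\<sigma> 0 = 0"
  using sigma_add[of 0 0] by simp

lemma sigma_minus [simp]: "\<sigma> (- x) = - \<sigma> x"
  using sigma_add[of x "- x"] by (metis add.right_inverse sigma_zero minus_unique)

lemma sigma_diff [simp]: "\<sigma> (x - y) = \<sigma> x - \<sigma> y"
  using sigma_add[of x "- y"] by simp

lemma sigma_eq_zero_iff [simp]: "\<sigma> x = 0 \<longleftrightarrow> x = 0"
  using sigma_inj sigma_zero by (metis injD)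

lemma sigma_one [simp]: "\<sigma> 1 = 1"
  using sigma_mult[of 1 1] by (metis mult_cancel_left1 sigma_eq_zero_iff zero_neq_one)

lemma sigma_inverse [simp]: "\<sigma> (inverse x) = inverse (\<sigma> x)"
  using sigma_mult[of x "inverse x"] by (cases "x = 0") (auto intro: inverse_unique[symmetric])

lemma sigma_divide [simp]: "\<sigma> (x / y) = \<sigma> x / \<sigma> y"
  by (simp add: divide_inverse)

lemma sigma_of_nat [simp]: "\<sigma> (of_nat n) = of_nat n"
  by (induction n) auto

lemma sigma_numeral [simp]: "\<sigma> (numeral n) = numeral n"
  using sigma_of_nat[of "numeral n"] by simp

lemma sigma_power [simp]: "\<sigma> (x ^ n) = \<sigma> x ^ n"
  by (induction n) auto

lemma vge_sigma_iff [simp]: "vge (\<sigma> x) n \<longleftrightarrow> vge x n"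
  by (cases "x = 0") (auto simp: val_ge_def val_sigma)

lemma acts_trivially_mod_sigma2:
  assumes "acts_trivially_mod \<sigma> j"
  shows "acts_trivially_mod (\<lambda>x. \<sigma> (\<sigma> x)) j"
  unfolding acts_trivially_mod_def
proof (intro allI impI)
  fix x assume "vge x 0"
  then have "vge (\<sigma> (\<sigma> x - x)) j" "vge (\<sigma> x - x) j"
    using assms by (auto simp: acts_trivially_mod_def simp del: sigma_diff)
  moreover have "\<sigma> (\<sigma> x) - x = \<sigma> (\<sigma> x - x) + (\<sigma> x - x)"
    by simp
  ultimately show "vge (\<sigma> (\<sigma> x) - x) j"
    by (metis vge_add)
qed

lemma acts_trivially_mod_sigma3_iff:
  "acts_trivially_mod (\<lambda>x. \<sigma> (\<sigma> (\<sigma> x))) j \<longleftrightarrow> acts_trivially_mod \<sigma> j"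
proof
  assume "acts_trivially_mod (\<lambda>x. \<sigma> (\<sigma> (\<sigma> x))) j"
  then have "vge (\<sigma> (\<sigma> (\<sigma> (\<sigma> x))) - \<sigma> x) j" if "vge x 0" for x
    using that by (simp add: acts_trivially_mod_def del: sigma_order4)
  then show "acts_trivially_mod \<sigma> j"
    unfolding acts_trivially_mod_def by (simp add: vge_commute)
next
  assume "acts_trivially_mod \<sigma> j"
  then have "vge (\<sigma> (\<sigma> (\<sigma> x)) - \<sigma> x) j" "vge (\<sigma> x - x) j" if "vge x 0" for x
    using that acts_trivially_mod_sigma2
    by (auto simp: acts_trivially_mod_def simp del: sigma_diff)
  moreover have "\<sigma> (\<sigma> (\<sigma> x)) - x = (\<sigma> (\<sigma> (\<sigma> x)) - \<sigma> x) + (\<sigma> x - x)" for x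
    by simp
  ultimately show "acts_trivially_mod (\<lambda>x. \<sigma> (\<sigma> (\<sigma> x))) j"
    unfolding acts_trivially_mod_def by (metis vge_add)
qed

lemma lower_breaks_iff:
  "j \<in> lower_breaks v \<sigma> \<longleftrightarrow> 1 \<le> j \<and>
    (acts_trivially_mod \<sigma> (j + 1) \<noteq> acts_trivially_mod \<sigma> (j + 2) \<or>
     acts_trivially_mod (\<lambda>x. \<sigma> (\<sigma> x)) (j + 1) \<noteq> acts_trivially_mod (\<lambda>x. \<sigma> (\<sigma> x)) (j + 2))"
proof -
  have "cyc_group \<sigma> = (\<lambda>k. \<sigma> ^^ k) ` {..<4}"
    unfolding cyc_group_def by auto
  also have "{..<4} = {0, 1, 2, 3 :: nat}"
    by auto
  finally have cyc: "cyc_group \<sigma> = {id, \<sigma>, \<lambda>x. \<sigma> (\<sigma> x), \<lambda>x. \<sigma> (\<sigma> (\<sigma> x))}"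
    by (simp add: numeral_eq_Suc comp_def)
  have id: "acts_trivially_mod id i" for i
    by (simp add: acts_trivially_mod_def)
  show ?thesis
    unfolding lower_breaks_def lower_ram_group_eq cyc
    using acts_trivially_mod_sigma3_iff id
    by (auto simp: add.assoc)
qed

text \<open>\<open>\<sigma> \<in> G\<^sub>j\<close> implies \<open>\<sigma>\<^sup>2 \<in> G\<^sub>j\<close>, so the lower break belongs to \<open>\<sigma>\<close> and the upper one to
  \<open>\<sigma>\<^sup>2\<close>.\<close>

lemma acts_trivially_mod_at_breaks:
  assumes breaks: "lower_breaks v \<sigma> = {b1, b2}" and "b1 < b2"
  shows "1 \<le> b1"
    and "acts_trivially_mod \<sigma> (b1 + 1)" "\<not> acts_trivially_mod \<sigma> (b1 + 2)"
    and "acts_trivially_mod (\<lambda>x. \<sigma> (\<sigma> x)) (b2 + 1)"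
    and "\<not> acts_trivially_mod (\<lambda>x. \<sigma> (\<sigma> x)) (b2 + 2)"
proof -
  let ?P = "acts_trivially_mod \<sigma>" and ?Q = "acts_trivially_mod (\<lambda>x. \<sigma> (\<sigma> x))"
  have jump: "1 \<le> j \<and> (?P (j + 1) \<and> \<not> ?P (j + 2) \<or> ?Q (j + 1) \<and> \<not> ?Q (j + 2))"
    if "j \<in> {b1, b2}" for j
    using that breaks lower_breaks_iff[of j] acts_trivially_mod_mono[of _ "j + 2" "j + 1"] by auto
  have Pmono: "?P j \<Longrightarrow> i \<le> j \<Longrightarrow> ?P i" and Qmono: "?Q j \<Longrightarrow> i \<le> j \<Longrightarrow> ?Q i" for i j
    by (blast intro: acts_trivially_mod_mono)+
  have Q2: "?Q (b2 + 1) \<and> \<not> ?Q (b2 + 2)"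
  proof (rule ccontr)
    assume "\<not> ?thesis"
    then have "?P (b2 + 1)"
      using jump[of b2] by blast
    then have "?P (b1 + 2)" "?Q (b2 + 1)"
      using Pmono \<open>b1 < b2\<close> acts_trivially_mod_sigma2 by auto
    then show False
      using jump[of b1] Qmono[of "b2 + 1" "b1 + 2"] \<open>b1 < b2\<close> by auto
  qed
  then have "?P (b1 + 1) \<and> \<not> ?P (b1 + 2)"
    using jump[of b1] Qmono[of "b2 + 1" "b1 + 2"] \<open>b1 < b2\<close> by auto
  then show "1 \<le> b1" "?P (b1 + 1)" "\<not> ?P (b1 + 2)" "?Q (b2 + 1)" "\<not> ?Q (b2 + 2)"
    using Q2 jump[of b1] by auto
qed

end

locale cyclic_quartic_ramified =
  valued_field_aut4 v \<sigma> + finite_residue_char2 v for v :: "'k::field_char_0 \<Rightarrow> int" and \<sigma> +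
  fixes \<pi> :: 'k
  assumes fixed_val_dvd: "x \<noteq> 0 \<Longrightarrow> \<sigma> x = x \<Longrightarrow> 4 dvd v x"
    and fixed_val_exists: "\<exists>c. c \<noteq> 0 \<and> \<sigma> c = c \<and> v c = 4 * k"
    and uniformizer: "\<pi> \<noteq> 0" "v \<pi> = 1"
    and sigma_acts_trivially: "acts_trivially_mod \<sigma> 1"
begin

lemma sigma_powers_cong:
  assumes "vge x 0"
  shows "vge (\<sigma> x - x) 1" "vge (\<sigma> (\<sigma> x) - x) 1" "vge (\<sigma> (\<sigma> (\<sigma> x)) - x) 1"
  using assms sigma_acts_trivially acts_trivially_mod_sigma2 acts_trivially_mod_sigma3_iff
  unfolding acts_trivially_mod_def by blast+

text \<open>The fixed representative is the norm of a fourth root of \<open>u\<close> modulo the maximal ideal.\<close>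

lemma exists_fixed_cong:
  assumes "vge u 0"
  obtains c where "\<sigma> c = c" "vge (u - c) 1"
proof -
  obtain w where w: "vge w 0" "vge (w ^ 4 - u) 1"
    using exists_power2_root[OF assms, of 2] by auto
  define e1 e2 e3 where "e1 = \<sigma> w - w" and "e2 = \<sigma> (\<sigma> w) - w" and "e3 = \<sigma> (\<sigma> (\<sigma> w)) - w"
  have e: "vge e1 1" "vge e2 1" "vge e3 1"
    using sigma_powers_cong[OF w(1)] unfolding e1_def e2_def e3_def by auto
  define c where "c = w * \<sigma> w * \<sigma> (\<sigma> w) * \<sigma> (\<sigma> (\<sigma> w))"
  have "\<sigma> c = c"
    unfolding c_def by (simp add: algebra_simps)
  have "c - w ^ 4 = w * (e1 * (w + e2) * (w + e3) + w * e2 * (w + e3) + w * w * e3)"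
    unfolding c_def e1_def e2_def e3_def by (simp add: algebra_simps power4_eq_xxxx)
  moreover have "vge (w + e2) 0" "vge (w + e3) 0"
    using e w vge_add vge_mono by fastforce+
  then have "vge (e1 * (w + e2) * (w + e3) + w * e2 * (w + e3) + w * w * e3) 1"
    using e w vge_mult vge_add by (metis add_0 add.commute)
  ultimately have "vge (c - w ^ 4) 1"
    using vge_mult w(1) by fastforce
  then have "vge ((c - w ^ 4) + (w ^ 4 - u)) 1"
    using w(2) vge_add by blast
  then show ?thesis
    using that \<open>\<sigma> c = c\<close> by (simp add: vge_commute)
qed

lemma fixed_power_unit_decomp:
  assumes "y \<noteq> 0"
  obtains c j u where "c \<noteq> 0" "\<sigma> c = c" "u \<noteq> 0" "v u = 0" "y = c * (\<pi> ^ j * u)"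
    "int j = v y mod 4"
proof -
  obtain c where c: "c \<noteq> 0" "\<sigma> c = c" "v c = 4 * (v y div 4)"
    using fixed_val_exists by blast
  define j where "j = nat (v y mod 4)"
  have nz: "c * \<pi> ^ j \<noteq> 0"
    using c uniformizer by simp
  have "v (c * \<pi> ^ j) = v y"
    using c uniformizer by (simp add: j_def val_mult val_power)
  then have "v (y / (c * \<pi> ^ j)) = 0"
    using assms nz by (simp add: val_divide)
  moreover have "y = c * (\<pi> ^ j * (y / (c * \<pi> ^ j)))"
    using nz by (simp add: field_simps)
  moreover have "int j = v y mod 4"
    by (simp add: j_def)
  ultimately show ?thesis
    using that[of c "y / (c * \<pi> ^ j)" j] c assms nz by simp
qed

lemma exists_val: "\<exists>x. x \<noteq> 0 \<and> v x = n"
proof -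
  obtain c where c: "c \<noteq> 0" "v c = 4 * (n div 4)"
    using fixed_val_exists by blast
  then show ?thesis
    using uniformizer by (intro exI[of _ "c * \<pi> ^ nat (n mod 4)"]) (simp add: val_mult val_power)
qed

end

locale single_break_automorphism = cyclic_quartic_ramified v \<sigma> \<pi>
  for v :: "'k::field_char_0 \<Rightarrow> int" and \<sigma> \<pi> +
  fixes g :: "'k \<Rightarrow> 'k" and b :: int
  assumes g_add [simp]: "g (x + y) = g x + g y"
    and g_mult [simp]: "g (x * y) = g x * g y"
    and g_eq_zero_iff [simp]: "g x = 0 \<longleftrightarrow> x = 0"
    and g_one [simp]: "g 1 = 1"
    and g_fixed: "\<sigma> c = c \<Longrightarrow> g c = c"
    and g_acts_trivially: "acts_trivially_mod g (b + 1)"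
    and g_not_acts_trivially: "\<not> acts_trivially_mod g (b + 2)"
    and break_pos: "1 \<le> b"
begin

lemma g_zero [simp]: "g 0 = 0"
  by simp

lemma g_minus [simp]: "g (- x) = - g x"
  using g_add[of x "- x"] by (metis add.right_inverse g_eq_zero_iff minus_unique)

lemma g_diff [simp]: "g (x - y) = g x - g y"
  using g_add[of x "- y"] by simp

definition dev :: "'k \<Rightarrow> 'k" where
  "dev y = g y / y - 1"

lemma displacement_eq: "y \<noteq> 0 \<Longrightarrow> g y - y = y * dev y"
  unfolding dev_def by (simp add: field_simps)

lemma dev_mult: "x \<noteq> 0 \<Longrightarrow> y \<noteq> 0 \<Longrightarrow> dev (x * y) = dev x + dev y + dev x * dev y"
  unfolding dev_def by (simp add: field_simps)

lemma dev_fixed_mult: "\<sigma> c = c \<Longrightarrow> c \<noteq> 0 \<Longrightarrow> dev (c * y) = dev y"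
  unfolding dev_def by (simp add: g_fixed)

lemma vge_dev_iff: "y \<noteq> 0 \<Longrightarrow> vge (dev y) (n - v y) \<longleftrightarrow> vge (g y - y) n"
  by (cases "dev y = 0") (auto simp: displacement_eq val_ge_def val_mult)

lemma vge_dev_unit: "u \<noteq> 0 \<Longrightarrow> v u = 0 \<Longrightarrow> vge (dev u) (b + 1)"
  using g_acts_trivially vge_dev_iff[of u "b + 1"]
  by (simp add: acts_trivially_mod_def val_ge_def)

lemma vge_dev_uniformizer: "vge (dev \<pi>) b"
  using g_acts_trivially vge_dev_iff[of \<pi> "b + 1"] uniformizer
  by (simp add: acts_trivially_mod_def val_ge_def)

lemma vge_dev_mult:
  assumes "x \<noteq> 0" "y \<noteq> 0" "vge (dev x) n" "vge (dev y) n" "0 \<le> n"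
  shows "vge (dev (x * y)) n"
proof -
  have "vge (dev x * dev y) n"
    using vge_mult[OF assms(3,4)] vge_mono assms(5) by fastforce
  then show ?thesis
    using dev_mult[OF assms(1,2)] vge_add assms(3,4) by metis
qed

lemma vge_dev_power: "x \<noteq> 0 \<Longrightarrow> vge (dev x) n \<Longrightarrow> 0 \<le> n \<Longrightarrow> vge (dev (x ^ j)) n"
proof (induction j)
  case (Suc j)
  then show ?case
    using vge_dev_mult[of x "x ^ j" n] by simp
qed (simp add: dev_def)

lemma vge_dev_of_uniformizer:
  assumes "y \<noteq> 0" "vge (dev \<pi>) n" "0 \<le> n" "n \<le> b + 1"
  shows "vge (dev y) n"
proof -
  obtain c j u where d: "c \<noteq> 0" "\<sigma> c = c" "u \<noteq> 0" "v u = 0" "y = c * (\<pi> ^ j * u)"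
    using fixed_power_unit_decomp[OF assms(1)] by blast
  have "vge (dev u) n"
    using vge_dev_unit d vge_mono assms by blast
  then show ?thesis
    using d dev_fixed_mult vge_dev_mult[of "\<pi> ^ j" u n] vge_dev_power assms uniformizer by simp
qed

lemma vge_dev: "y \<noteq> 0 \<Longrightarrow> vge (dev y) b"
  using vge_dev_of_uniformizer[OF _ vge_dev_uniformizer] break_pos by simp

lemma vge_displacement: "vge (g y - y) (v y + b)"
  using vge_dev vge_dev_iff[of y "v y + b"] by (cases "y = 0") auto

lemma val_dev_uniformizer: "dev \<pi> \<noteq> 0 \<and> v (dev \<pi>) = b"
proof -
  have "\<not> vge (dev \<pi>) (b + 1)"
  proof
    assume "vge (dev \<pi>) (b + 1)"
    then have nonunit: "vge (g x - x) (b + 2)" if "x \<noteq> 0" "1 \<le> v x" for x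
      using vge_dev_of_uniformizer[of x "b + 1"] break_pos that vge_dev_iff[of x "v x + b + 1"]
      by (auto simp: val_ge_def)
    have "vge (g x - x) (b + 2)" if x: "vge x 0" for x
    proof -
      obtain c where c: "\<sigma> c = c" "vge (x - c) 1"
        using exists_fixed_cong[OF x] by blast
      have "g x - x = g (x - c) - (x - c)"
        using g_fixed[OF c(1)] by simp
      then show ?thesis
        using nonunit[of "x - c"] c(2) by (cases "x = c") (auto simp: val_ge_def)
    qed
    then show False
      using g_not_acts_trivially by (simp add: acts_trivially_mod_def)
  qed
  then show ?thesis
    using vge_dev_uniformizer by (auto simp: val_ge_def)
qed

lemma val_dev_mult_dominant:
  assumes "x \<noteq> 0" "y \<noteq> 0" "dev x \<noteq> 0" "v (dev x) = n" "0 \<le> n" "vge (dev y) (n + 1)"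
  shows "dev (x * y) \<noteq> 0 \<and> v (dev (x * y)) = n"
proof -
  have "vge (dev x * dev y) (n + 1)"
    using vge_mult[OF vge_val assms(6), of "dev x"] assms(4,5) vge_mono by fastforce
  then have "vge (dev y + dev x * dev y) (v (dev x) + 1)"
    using vge_add assms(4,6) by blast
  then show ?thesis
    using val_add_dominant[OF assms(3)] dev_mult[OF assms(1,2)] assms(4) by (simp add: add.assoc)
qed

lemma vge_dev_uniformizer_square: "vge (dev (\<pi> ^ 2)) (b + 1)"
proof -
  have "dev (\<pi> ^ 2) = 2 * dev \<pi> + dev \<pi> * dev \<pi>"
    using dev_mult[of \<pi> \<pi>] uniformizer by (simp add: power2_eq_square)
  moreover have "vge (2 * dev \<pi>) (b + 1)"
    using vge_mult[OF two_in_ideal vge_dev_uniformizer] by (simp add: add.commute)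
  moreover have "vge (dev \<pi> * dev \<pi>) (b + 1)"
    using vge_mult[OF vge_dev_uniformizer vge_dev_uniformizer] break_pos vge_mono by fastforce
  ultimately show ?thesis
    using vge_add by simp
qed

lemma val_dev_odd:
  assumes "y \<noteq> 0" "odd (v y)"
  shows "dev y \<noteq> 0 \<and> v (dev y) = b"
proof -
  obtain c j u where d: "c \<noteq> 0" "\<sigma> c = c" "u \<noteq> 0" "v u = 0" "y = c * (\<pi> ^ j * u)"
    "int j = v y mod 4"
    using fixed_power_unit_decomp[OF assms(1)] by blast
  have "j = 1 \<or> j = 3"
    using d(6) assms(2) by presburger
  then have split: "\<pi> ^ j * u = \<pi> * (\<pi> ^ (j - 1) * u)" "j - 1 = 0 \<or> j - 1 = 2"
    by (auto simp: power_eq_if)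
  have "vge (dev (\<pi> ^ (j - 1) * u)) (b + 1)"
    using split(2) vge_dev_unit[OF d(3,4)] vge_dev_mult vge_dev_uniformizer_square d(3) uniformizer
      break_pos by auto
  then show ?thesis
    using val_dev_mult_dominant[of \<pi> "\<pi> ^ (j - 1) * u" b] val_dev_uniformizer uniformizer d break_pos
      dev_fixed_mult split(1) by simp
qed

lemma val_displacement_odd:
  "y \<noteq> 0 \<Longrightarrow> odd (v y) \<Longrightarrow> g y - y \<noteq> 0 \<and> v (g y - y) = v y + b"
  using displacement_eq val_dev_odd val_mult by simp

end

locale quartic_breaks = cyclic_quartic_ramified v \<sigma> \<pi>
  for v :: "'k::field_char_0 \<Rightarrow> int" and \<sigma> \<pi> +
  fixes b1 b2 e0 :: int
  assumes val_two: "v 2 = 4 * e0"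
    and sigma_acts_trivially_b1: "acts_trivially_mod \<sigma> (b1 + 1)"
    and sigma_not_acts_trivially_b1: "\<not> acts_trivially_mod \<sigma> (b1 + 2)"
    and sigma2_acts_trivially_b2: "acts_trivially_mod (\<lambda>x. \<sigma> (\<sigma> x)) (b2 + 1)"
    and sigma2_not_acts_trivially_b2: "\<not> acts_trivially_mod (\<lambda>x. \<sigma> (\<sigma> x)) (b2 + 2)"
    and b1_pos: "1 \<le> b1" and odd_b1: "odd b1" and e0_less_b1: "e0 < b1"
    and b2_eq: "b2 = b1 + 2 * e0"
begin

lemma e0_pos: "1 \<le> e0"
  using two_in_ideal val_two by (simp add: val_ge_def)

lemma vge_two_mult: "vge x n \<Longrightarrow> vge (2 * x) (n + 4 * e0)"
  using vge_mult[of 2 "4 * e0" x n] val_two by (simp add: val_ge_def add.commute)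

end

sublocale quartic_breaks \<subseteq> sigma1: single_break_automorphism v \<sigma> \<pi> \<sigma> b1
  by unfold_locales (use sigma_acts_trivially_b1 sigma_not_acts_trivially_b1 b1_pos in auto)

sublocale quartic_breaks \<subseteq> sigma2: single_break_automorphism v \<sigma> \<pi> "\<lambda>x. \<sigma> (\<sigma> x)" b2
  by unfold_locales
    (use sigma2_acts_trivially_b2 sigma2_not_acts_trivially_b2 b1_pos e0_pos b2_eq in auto)

context quartic_breaks
begin

abbreviation \<tau> :: 'k where
  "\<tau> \<equiv> sigma1.dev \<pi>"

lemma b1_less: "b1 < 2 * e0"
proof (rule ccontr)
  assume "\<not> b1 < 2 * e0"
  then have big: "b2 + 1 \<le> 2 * b1"
    using odd_b1 b2_eq by presburger
  have \<tau>: "\<tau> \<noteq> 0" "v \<tau> = b1"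
    using sigma1.val_dev_uniformizer by auto
  \<comment> \<open>\<open>\<sigma>\<^sup>2\<pi> / \<pi> = (\<sigma>\<pi> / \<pi>) \<cdot> \<sigma> (\<sigma>\<pi> / \<pi>) = (1 + \<tau>) (1 + \<sigma> \<tau>)\<close>\<close>
  have "sigma2.dev \<pi> = 2 * \<tau> + (\<sigma> \<tau> - \<tau>) + \<tau> * \<sigma> \<tau>"
    unfolding sigma1.dev_def sigma2.dev_def using uniformizer by (simp add: field_simps)
  moreover have "vge (2 * \<tau>) (b2 + 1)"
    using vge_mono[OF vge_two_mult[OF vge_val]] \<tau> b2_eq e0_pos by fastforce
  moreover have "vge (\<sigma> \<tau> - \<tau>) (b2 + 1)"
    using sigma1.vge_displacement[of \<tau>] \<tau> big vge_mono by fastforce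
  moreover have "vge (\<tau> * \<sigma> \<tau>) (b2 + 1)"
    using vge_mult[OF vge_val vge_val, of \<tau> "\<sigma> \<tau>"] \<tau> val_sigma big vge_mono by fastforce
  ultimately have "vge (sigma2.dev \<pi>) (b2 + 1)"
    using vge_add by presburger
  then show False
    using sigma2.val_dev_uniformizer by (simp add: val_ge_def)
qed

lemma val_even_if_sigma2_fixed: "\<sigma> (\<sigma> x) = x \<Longrightarrow> x \<noteq> 0 \<Longrightarrow> even (v x)"
  using fixed_val_dvd[of "x * \<sigma> x"] by (simp add: val_mult val_sigma mult.commute) presburger

text \<open>\<open>\<pi>\<^sub>1\<close> is the norm of \<open>\<pi>\<close> to \<open>K\<^sub>1\<close>, a uniformizer of \<open>K\<^sub>1\<close>.\<close>

definition \<pi>\<^sub>1 :: 'k where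
  "\<pi>\<^sub>1 = \<pi> * \<sigma> (\<sigma> \<pi>)"

lemma pi1_props: "\<pi>\<^sub>1 \<noteq> 0" "v \<pi>\<^sub>1 = 2" "\<sigma> (\<sigma> \<pi>\<^sub>1) = \<pi>\<^sub>1"
  unfolding \<pi>\<^sub>1_def using uniformizer by (auto simp: val_mult val_sigma mult.commute)

lemma val_dev_pi1: "sigma1.dev \<pi>\<^sub>1 \<noteq> 0 \<and> v (sigma1.dev \<pi>\<^sub>1) = 2 * b1"
proof -
  have \<tau>: "\<tau> \<noteq> 0" "v \<tau> = b1"
    using sigma1.val_dev_uniformizer by auto
  have "sigma1.dev \<pi>\<^sub>1 = \<tau> * \<sigma> (\<sigma> \<tau>) + (2 * \<tau> + (\<sigma> (\<sigma> \<tau>) - \<tau>))"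
    unfolding sigma1.dev_def \<pi>\<^sub>1_def using uniformizer by (simp add: field_simps)
  moreover have "\<tau> * \<sigma> (\<sigma> \<tau>) \<noteq> 0" "v (\<tau> * \<sigma> (\<sigma> \<tau>)) = 2 * b1"
    using \<tau> by (auto simp: val_mult val_sigma)
  moreover have "vge (2 * \<tau>) (2 * b1 + 1)"
    by (rule vge_mono[OF vge_two_mult[OF vge_val]]) (use \<tau> b1_less b1_pos in simp)
  moreover have "vge (\<sigma> (\<sigma> \<tau>) - \<tau>) (2 * b1 + 1)"
    by (rule vge_mono[OF sigma2.vge_displacement]) (use \<tau> b2_eq e0_pos in simp)
  ultimately show ?thesis
    using val_add_dominant vge_add by metis
qed

text \<open>The leading term \<open>m\<close> is a fixed element times \<open>\<pi>\<^sub>1\<^sup>j\<close>, so its displacement is governed by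
  \<open>val_dev_pi1\<close>.\<close>

lemma sigma2_fixed_leading_term:
  assumes "\<sigma> (\<sigma> x) = x" "x \<noteq> 0"
  obtains m where "\<sigma> (\<sigma> m) = m" "vge (\<sigma> m - m) (v x + 2 * b1)" "vge (x - m) (v x + 1)"
    "4 dvd v x \<Longrightarrow> \<sigma> m = m"
proof -
  obtain c where c: "c \<noteq> 0" "\<sigma> c = c" "v c = 4 * (v x div 4)"
    using fixed_val_exists by blast
  define j :: nat where "j = (if 4 dvd v x then 0 else 1)"
  have "v x = v c + 2 * int j"
    using val_even_if_sigma2_fixed[OF assms] c(3) unfolding j_def by presburger
  then have val_cj: "v (c * \<pi>\<^sub>1 ^ j) = v x"
    using c(1) pi1_props by (simp add: val_mult val_power)
  have nz: "c * \<pi>\<^sub>1 ^ j \<noteq> 0"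
    using c pi1_props by simp
  define w where "w = x / (c * \<pi>\<^sub>1 ^ j)"
  have "vge w 0"
    unfolding w_def using nz assms val_cj by (simp add: val_ge_def val_divide)
  then obtain c0 where c0: "\<sigma> c0 = c0" "vge (w - c0) 1"
    using exists_fixed_cong by blast
  have "vge c0 0"
    using vge_diff[OF \<open>vge w 0\<close>, of "w - c0"] c0(2) vge_mono by fastforce
  define m where "m = c * c0 * \<pi>\<^sub>1 ^ j"
  have "x - m = (w - c0) * (c * \<pi>\<^sub>1 ^ j)"
    unfolding m_def w_def using nz by (simp add: field_simps)
  then have close: "vge (x - m) (v x + 1)"
    using vge_mult_val[OF c0(2), of "c * \<pi>\<^sub>1 ^ j"] val_cj by (simp add: add.commute)
  have dev_pow: "vge (sigma1.dev (\<pi>\<^sub>1 ^ j)) (2 * b1)"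
    using sigma1.vge_dev_power[of "\<pi>\<^sub>1" "2 * b1" j] val_dev_pi1 pi1_props b1_pos by (simp add: val_ge_def)
  have "\<sigma> m - m = (c * c0) * (\<pi>\<^sub>1 ^ j * sigma1.dev (\<pi>\<^sub>1 ^ j))"
    unfolding m_def using sigma1.displacement_eq[of "\<pi>\<^sub>1 ^ j"] c c0 pi1_props by (simp add: algebra_simps)
  moreover have "vge (c * c0) (v c)"
    using vge_mult[OF vge_val \<open>vge c0 0\<close>] by simp
  moreover have "vge (\<pi>\<^sub>1 ^ j * sigma1.dev (\<pi>\<^sub>1 ^ j)) (2 * int j + 2 * b1)"
    using vge_mult[OF vge_val[of "\<pi>\<^sub>1 ^ j"] dev_pow] pi1_props by (simp add: val_power ac_simps)
  ultimately have "vge (\<sigma> m - m) (v x + 2 * b1)"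
    using vge_mult \<open>v x = v c + 2 * int j\<close> by (metis add.assoc)
  moreover have "\<sigma> (\<sigma> m) = m"
    unfolding m_def using c c0 pi1_props by simp
  moreover have "4 dvd v x \<Longrightarrow> \<sigma> m = m"
    unfolding m_def j_def using c c0 by simp
  ultimately show ?thesis
    using that close by blast
qed

text \<open>Subtracting leading terms raises the valuation by at least one each time.\<close>

lemma vge_sigma_diff_sigma2_fixed:
  assumes "\<sigma> (\<sigma> x) = x"
  shows "vge (\<sigma> x - x) (v x + 2 * b1)"
proof -
  have "vge (\<sigma> x - x) (v x + min (2 * b1) (int n))" if "\<sigma> (\<sigma> x) = x" for n x
    using that
  proof (induction n arbitrary: x)
    case 0
    then show ?case
      using vge_diff[of "\<sigma> x" "v x" x] vge_val[of x] vge_val[of "\<sigma> x"] val_sigma b1_pos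
      by (cases "x = 0") auto
  next
    case (Suc n)
    show ?case
    proof (cases "x = 0")
      case False
      then obtain m where m: "\<sigma> (\<sigma> m) = m" "vge (\<sigma> m - m) (v x + 2 * b1)" "vge (x - m) (v x + 1)"
        using sigma2_fixed_leading_term[OF Suc.prems] by blast
      have "\<sigma> (\<sigma> (x - m)) = x - m"
        using m(1) Suc.prems by simp
      then have "vge (\<sigma> (x - m) - (x - m)) (v (x - m) + min (2 * b1) (int n))"
        by (rule Suc.IH)
      then have "vge (\<sigma> (x - m) - (x - m)) (v x + min (2 * b1) (int (Suc n)))"
        using m(3) by (cases "x = m") (auto simp: val_ge_def)
      moreover have "vge (\<sigma> m - m) (v x + min (2 * b1) (int (Suc n)))"
        using m(2) vge_mono by fastforce
      moreover have "\<sigma> x - x = (\<sigma> (x - m) - (x - m)) + (\<sigma> m - m)"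
        by simp
      ultimately show ?thesis
        using vge_add by metis
    qed simp
  qed
  from this[where n = "nat (2 * b1)"] show ?thesis
    using assms b1_pos by simp
qed

lemma val_sigma_diff_sigma2_fixed:
  assumes "\<sigma> (\<sigma> x) = x" "x \<noteq> 0" "v x mod 4 = 2"
  shows "\<sigma> x - x \<noteq> 0 \<and> v (\<sigma> x - x) = v x + 2 * b1"
proof -
  have "4 * ((v x - 2) div 4) = v x - 2"
    using assms(3) by presburger
  then obtain c where c: "c \<noteq> 0" "\<sigma> c = c" "v c = v x - 2"
    using fixed_val_exists[of "(v x - 2) div 4"] by metis
  have nz: "c * \<pi>\<^sub>1 \<noteq> 0" "v (c * \<pi>\<^sub>1) = v x"
    using c pi1_props by (auto simp: val_mult)
  define u where "u = x / (c * \<pi>\<^sub>1)"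
  have u: "u \<noteq> 0" "v u = 0" "\<sigma> (\<sigma> u) = u"
    unfolding u_def using nz assms c pi1_props by (auto simp: val_divide)
  obtain m where m: "\<sigma> (\<sigma> m) = m" "vge (u - m) 1" "\<sigma> m = m"
    using sigma2_fixed_leading_term[OF u(3,1)] u(2) by auto
  have "vge (\<sigma> (u - m) - (u - m)) (2 * b1 + 1)"
    using vge_sigma_diff_sigma2_fixed[of "u - m"] u m by (cases "u = m") (auto simp: val_ge_def)
  then have "vge (sigma1.dev u) (2 * b1 + 1)"
    using sigma1.vge_dev_iff[OF u(1), of "2 * b1 + 1"] u(2) m(3) by simp
  then have "sigma1.dev (\<pi>\<^sub>1 * u) \<noteq> 0 \<and> v (sigma1.dev (\<pi>\<^sub>1 * u)) = 2 * b1"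
    using sigma1.val_dev_mult_dominant[of "\<pi>\<^sub>1" u] val_dev_pi1 pi1_props u b1_pos by simp
  moreover have "x = c * (\<pi>\<^sub>1 * u)"
    unfolding u_def using nz by simp
  ultimately show ?thesis
    using sigma1.displacement_eq[OF assms(2)] sigma1.dev_fixed_mult c assms(2) by (simp add: val_mult)
qed

definition \<theta> :: 'k where
  "\<theta> = \<pi> / (\<pi> - \<sigma> (\<sigma> \<pi>))"

definition rho :: "'k \<Rightarrow> 'k" where
  "rho x = \<theta> * ((\<sigma> x + x) - \<sigma> (\<sigma> (\<sigma> x + x)))"

definition mu :: "'k \<Rightarrow> 'k" where
  "mu x = \<sigma> x + x - rho x"

lemma theta_props: "\<theta> \<noteq> 0" "v \<theta> = - b2" "\<theta> + \<sigma> (\<sigma> \<theta>) = 1"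
proof -
  have "\<sigma> (\<sigma> \<pi>) - \<pi> \<noteq> 0" "v (\<sigma> (\<sigma> \<pi>) - \<pi>) = 1 + b2"
    using sigma2.val_displacement_odd[of \<pi>] uniformizer by simp_all
  then have d: "\<pi> - \<sigma> (\<sigma> \<pi>) \<noteq> 0" "v (\<pi> - \<sigma> (\<sigma> \<pi>)) = 1 + b2"
    by (metis minus_diff_eq val_minus neg_equal_0_iff_equal)+
  then show "\<theta> \<noteq> 0" "v \<theta> = - b2"
    unfolding \<theta>_def using uniformizer by (auto simp: val_divide)
  have "\<sigma> (\<sigma> \<theta>) = - (\<sigma> (\<sigma> \<pi>) / (\<pi> - \<sigma> (\<sigma> \<pi>)))"
    unfolding \<theta>_def by (metis minus_diff_eq divide_minus_right sigma_order4 sigma_divide sigma_diff)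
  then show "\<theta> + \<sigma> (\<sigma> \<theta>) = 1"
    unfolding \<theta>_def using d by (simp add: diff_divide_distrib[symmetric])
qed

lemma mu_sigma2_fixed: "\<sigma> (\<sigma> (mu x)) = mu x"
proof -
  define \<beta> where "\<beta> = \<sigma> x + x"
  have theta2: "\<sigma> (\<sigma> \<theta>) = 1 - \<theta>"
    using theta_props(3) by (simp add: eq_diff_eq add.commute)
  have mu: "mu x = \<beta> - \<theta> * (\<beta> - \<sigma> (\<sigma> \<beta>))"
    unfolding mu_def rho_def \<beta>_def by simp
  have "\<sigma> (\<sigma> (mu x)) = \<sigma> (\<sigma> \<beta>) - \<sigma> (\<sigma> \<theta>) * (\<sigma> (\<sigma> \<beta>) - \<beta>)"
    unfolding mu by simp
  also have "\<dots> = mu x"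
    unfolding mu theta2 by (simp add: algebra_simps)
  finally show ?thesis .
qed

lemma mu_add: "mu (x + y) = mu x + mu y"
  unfolding mu_def rho_def by (simp add: algebra_simps)

lemma mu_fixed_mult: "\<sigma> c = c \<Longrightarrow> mu (c * x) = c * mu x"
  unfolding mu_def rho_def by (simp add: algebra_simps)

lemma val_sigma_add_self:
  assumes "x \<noteq> 0" "odd (v x)"
  shows "\<sigma> x + x \<noteq> 0 \<and> v (\<sigma> x + x) = v x + b1"
proof -
  have d: "\<sigma> x - x \<noteq> 0" "v (\<sigma> x - x) = v x + b1"
    using sigma1.val_displacement_odd[OF assms] by auto
  have "vge (2 * x) (v (\<sigma> x - x) + 1)"
    by (rule vge_mono[OF vge_two_mult[OF vge_val]]) (use d b1_less b1_pos in simp)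
  then have "\<sigma> x - x + 2 * x \<noteq> 0 \<and> v (\<sigma> x - x + 2 * x) = v (\<sigma> x - x)"
    by (rule val_add_dominant[OF d(1)])
  moreover have "\<sigma> x - x + 2 * x = \<sigma> x + x"
    by algebra
  ultimately show ?thesis
    using d(2) by simp
qed

lemma val_rho:
  assumes "x \<noteq> 0" "odd (v x)"
  shows "rho x \<noteq> 0 \<and> v (rho x) = v x + 2 * e0"
proof -
  define t where "t = x + \<sigma> (\<sigma> x)"
  have "vge (2 * x) (v x + b2)"
    by (rule vge_mono[OF vge_two_mult[OF vge_val]]) (use b1_less b2_eq in simp)
  moreover have "t = 2 * x + (\<sigma> (\<sigma> x) - x)"
    unfolding t_def by simp
  ultimately have "vge t (v x + b2)"
    using vge_add sigma2.vge_displacement by metis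
  then have "vge (\<sigma> t - t) (v x + b2 + 2 * b1)"
    using vge_sigma_diff_sigma2_fixed[of t] by (cases "t = 0") (auto simp: t_def val_ge_def)
  then have small: "vge (- (\<sigma> t - t)) (v x + b1 + 4 * e0 + 1)"
    unfolding vge_minus by (rule vge_mono) (use b2_eq e0_less_b1 in simp)
  \<comment> \<open>\<open>(1 - \<sigma>\<^sup>2)(\<sigma> + 1) x = -2 d - (\<sigma> t - t)\<close> with \<open>t \<in> K\<^sub>1\<close>, and \<open>-2 d\<close> dominates.\<close>
  define d where "d = \<sigma> (\<sigma> x) - \<sigma> x"
  have "d \<noteq> 0" "v d = v x + b1"
    unfolding d_def using sigma1.val_displacement_odd[OF assms] val_sigma[of "\<sigma> x - x"]
      sigma_eq_zero_iff[of "\<sigma> x - x"] by auto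
  then have lead: "- 2 * d \<noteq> 0" "v (- 2 * d) = v x + b1 + 4 * e0"
    using val_mult[of "- 2" d] val_two by auto
  have "- 2 * d + - (\<sigma> t - t) \<noteq> 0 \<and> v (- 2 * d + - (\<sigma> t - t)) = v (- 2 * d)"
    by (rule val_add_dominant[OF lead(1)]) (use small lead(2) in simp)
  moreover have "rho x = \<theta> * (- 2 * d + - (\<sigma> t - t))"
    unfolding rho_def t_def d_def by (simp add: algebra_simps)
  ultimately show ?thesis
    using theta_props lead(2) b2_eq by (simp add: val_mult)
qed

lemma val_mu:
  assumes "x \<noteq> 0" "odd (v x)"
  shows "mu x \<noteq> 0 \<and> v (mu x) = v x + b1"
proof -
  have "vge (- rho x) (v (\<sigma> x + x) + 1)"
    using val_rho[OF assms] val_sigma_add_self[OF assms] b1_less by (simp add: val_ge_def)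
  then have "(\<sigma> x + x) + - rho x \<noteq> 0 \<and> v ((\<sigma> x + x) + - rho x) = v (\<sigma> x + x)"
    using val_add_dominant val_sigma_add_self[OF assms] by blast
  then show ?thesis
    unfolding mu_def using val_sigma_add_self[OF assms] by simp
qed

definition mu_defect :: "'k \<Rightarrow> 'k" where
  "mu_defect x = \<sigma> (mu x) - mu x"

lemma sigma_mu_defect: "\<sigma> (mu_defect x) = - mu_defect x"
  unfolding mu_defect_def using mu_sigma2_fixed by simp

lemma mu_defect_add_fixed_mult:
  assumes "\<sigma> c = c"
  shows "mu_defect (x + c * y) = mu_defect x + c * mu_defect y"
proof -
  have "mu (x + c * y) = mu x + c * mu y"
    using assms by (simp only: mu_add mu_fixed_mult)
  then show ?thesis
    unfolding mu_defect_def using assms by (simp add: algebra_simps)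
qed

lemma vge_mu_defect:
  assumes "x \<noteq> 0" "odd (v x)"
  shows "vge (mu_defect x) (v x + 3 * b1)"
  using vge_sigma_diff_sigma2_fixed[OF mu_sigma2_fixed, of x] val_mu[OF assms]
  unfolding mu_defect_def by (simp add: algebra_simps)

lemma val_mu_defect:
  assumes "x \<noteq> 0" "odd (v x)" "(v x + b1) mod 4 = 2"
  shows "mu_defect x \<noteq> 0 \<and> v (mu_defect x) = v x + 3 * b1"
  using val_sigma_diff_sigma2_fixed[OF mu_sigma2_fixed, of x] val_mu[OF assms(1,2)] assms(3)
  unfolding mu_defect_def by simp

lemma exists_mu_fixed:
  assumes \<alpha>0: "\<alpha>0 \<noteq> 0" "odd (v \<alpha>0)" "4 dvd v \<alpha>0 + b1"
  obtains \<alpha> where "\<alpha> \<noteq> 0" "v \<alpha> = v \<alpha>0" "\<sigma> (mu \<alpha>) = mu \<alpha>"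
proof -
  define \<delta> where "\<delta> = \<alpha>0 * \<pi> ^ 2"
  have \<delta>: "\<delta> \<noteq> 0" "v \<delta> = v \<alpha>0 + 2"
    unfolding \<delta>_def using \<alpha>0 uniformizer by (auto simp: val_mult val_power)
  moreover have "(v \<alpha>0 + 2 + b1) mod 4 = 2"
    using \<alpha>0(3) by presburger
  ultimately have E\<delta>: "mu_defect \<delta> \<noteq> 0" "v (mu_defect \<delta>) = v \<alpha>0 + 2 + 3 * b1"
    using val_mu_defect[of \<delta>] \<alpha>0(2) by auto
  define c where "c = - (mu_defect \<alpha>0 / mu_defect \<delta>)"
  have c: "\<sigma> c = c"
    unfolding c_def by (simp add: sigma_mu_defect)
  have "mu_defect (\<alpha>0 + c * \<delta>) = mu_defect \<alpha>0 + c * mu_defect \<delta>"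
    by (rule mu_defect_add_fixed_mult[OF c])
  then have cancel: "mu_defect (\<alpha>0 + c * \<delta>) = 0"
    unfolding c_def using E\<delta>(1) by simp
  have "vge c (- 2)"
    using vge_divide_val[OF vge_mu_defect[OF \<alpha>0(1,2)] E\<delta>(1)] E\<delta>(2) unfolding c_def by simp
  have "vge c 0"
  proof (cases "c = 0")
    case False
    then have "4 dvd v c" "- 2 \<le> v c"
      using \<open>vge c (- 2)\<close> fixed_val_dvd[OF _ c] by (auto simp: val_ge_def)
    then have "0 \<le> v c"
      by presburger
    then show ?thesis
      by (simp add: val_ge_def)
  qed simp
  then have "vge (c * \<delta>) (v \<alpha>0 + 1)"
    using vge_mult[OF _ vge_val[of \<delta>]] \<delta> vge_mono by fastforce
  then have "\<alpha>0 + c * \<delta> \<noteq> 0 \<and> v (\<alpha>0 + c * \<delta>) = v \<alpha>0"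
    by (rule val_add_dominant[OF \<alpha>0(1)])
  then show ?thesis
    using that[of "\<alpha>0 + c * \<delta>"] cancel by (simp add: mu_defect_def)
qed

lemma exists_alpha:
  assumes "odd a"
  obtains \<alpha> where "\<alpha> \<noteq> 0" "v \<alpha> = a" "rho \<alpha> \<noteq> 0" "v (rho \<alpha>) = a + 2 * e0"
    "\<sigma> (\<sigma> (mu \<alpha>)) = mu \<alpha>" "mu \<alpha> \<noteq> 0" "v (mu \<alpha>) = a + b1"
    "4 dvd a + b1 \<Longrightarrow> \<sigma> (mu \<alpha>) = mu \<alpha>"
proof -
  obtain \<alpha>0 where \<alpha>0: "\<alpha>0 \<noteq> 0" "v \<alpha>0 = a"
    using exists_val by blast
  obtain \<alpha> where \<alpha>: "\<alpha> \<noteq> 0" "v \<alpha> = a" "4 dvd a + b1 \<Longrightarrow> \<sigma> (mu \<alpha>) = mu \<alpha>"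
  proof (cases "4 dvd a + b1")
    case True
    then show ?thesis
      using exists_mu_fixed[of \<alpha>0] that \<alpha>0 assms by auto
  qed (use that \<alpha>0 in blast)
  then show ?thesis
    using that val_rho[of \<alpha>] val_mu[of \<alpha>] mu_sigma2_fixed assms by simp
qed

end

lemma quartic_breaks_of_ramification:
  fixes v :: "'k::field_char_0 \<Rightarrow> int" and \<sigma> :: "'k \<Rightarrow> 'k"
  assumes "two_adic_local_field v" and "field_automorphism \<sigma>" and "\<sigma> ^^ 4 = id"
    and "\<forall>x. x \<noteq> 0 \<longrightarrow> v (\<sigma> x) = v x"
    and tot_ram: "{v x | x. x \<noteq> 0 \<and> \<sigma> x = x} = {4 * k | k. True}"
    and "v 2 = 4 * e0" and "lower_breaks v \<sigma> = {b1, b2}" and "b1 < b2"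
    and "odd b1" and "e0 < b1" and "b2 = b1 + 2 * e0"
  obtains \<pi> where "quartic_breaks v \<sigma> \<pi> b1 b2 e0"
proof -
  have nd: "normalized_discrete_valuation v"
    using assms(1) by (simp add: two_adic_local_field_def)
  interpret valued_field v
    using nd by unfold_locales (auto simp: normalized_discrete_valuation_def)
  interpret valued_field_aut4 v \<sigma>
  proof
    have "(\<sigma> ^^ 4) x = x" for x
      using assms(3) by simp
    then show "\<sigma> (\<sigma> (\<sigma> (\<sigma> x))) = x" for x
      by (simp add: numeral_eq_Suc)
  qed (use assms(2,4) in \<open>auto simp: field_automorphism_def bij_is_inj\<close>)
  obtain \<pi> where "\<pi> \<noteq> 0" "v \<pi> = 1"
    using nd by (auto simp: normalized_discrete_valuation_def)
  moreover have "\<exists>c. c \<noteq> 0 \<and> \<sigma> c = c \<and> v c = 4 * k" for k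
  proof -
    have "4 * k \<in> {v x | x. x \<noteq> 0 \<and> \<sigma> x = x}"
      unfolding tot_ram by blast
    then show ?thesis
      by auto
  qed
  moreover have "4 dvd v x" if "x \<noteq> 0" "\<sigma> x = x" for x
  proof -
    have "v x \<in> {4 * k | k. True}"
      unfolding tot_ram[symmetric] using that by blast
    then show ?thesis
      by auto
  qed
  moreover note acts_trivially_mod_at_breaks[OF assms(7,8)]
  ultimately have "quartic_breaks v \<sigma> \<pi> b1 b2 e0"
    using assms(1,5-) acts_trivially_mod_mono[of \<sigma> "b1 + 1" 1]
    by unfold_locales (auto simp: two_adic_local_field_def val_ideal_def val_ge_def)
  then show ?thesis
    using that by blast
qed

theorem lemma3p6:
  fixes v2 :: "'k::field_char_0 \<Rightarrow> int" and \<sigma> :: "'k \<Rightarrow> 'k"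
    and e0 b1 b2 :: int
  assumes local: "two_adic_local_field v2"
    and aut: "field_automorphism \<sigma>"
    and ord4: "\<sigma> ^^ 4 = id" and not2: "\<sigma> ^^ 2 \<noteq> id"
    and val_inv: "\<forall>x. x \<noteq> 0 \<longrightarrow> v2 (\<sigma> x) = v2 x"
    and tot_ram: "{v2 x | x. x \<noteq> 0 \<and> \<sigma> x = x} = {4 * k | k. True}"
    and e0_def: "v2 2 = 4 * e0"
    and breaks: "lower_breaks v2 \<sigma> = {b1, b2}" and "b1 < b2"
    and "odd b1" and "odd b2" and "e0 < b1" and "b2 = b1 + 2 * e0"
  shows "\<forall>a::int. odd a \<longrightarrow>
     (\<exists>\<alpha> \<rho>. \<alpha> \<noteq> 0 \<and> \<rho> \<noteq> 0 \<and> v2 \<alpha> = a \<and> v2 \<rho> = a + (b2 - b1) \<and>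
        (let \<mu> = \<sigma> \<alpha> + \<alpha> - \<rho> in (\<sigma> ^^ 2) \<mu> = \<mu> \<and> \<mu> \<noteq> 0 \<and> v2 \<mu> = a + b1)) \<and>
     (4 dvd (a + b1) \<longrightarrow>
       (\<exists>\<alpha> \<rho>. \<alpha> \<noteq> 0 \<and> \<rho> \<noteq> 0 \<and> v2 \<alpha> = a \<and> v2 \<rho> = a + (b2 - b1) \<and>
        (let \<mu> = \<sigma> \<alpha> + \<alpha> - \<rho> in (\<sigma> ^^ 2) \<mu> = \<mu> \<and> \<mu> \<noteq> 0 \<and> v2 \<mu> = a + b1 \<and> \<sigma> \<mu> = \<mu>)))"
  (is "\<forall>a. odd a \<longrightarrow> ?P a")
proof (intro allI impI)
  fix a :: int
  assume "odd a"
  obtain \<pi> where "quartic_breaks v2 \<sigma> \<pi> b1 b2 e0"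
    using quartic_breaks_of_ramification[OF local aut ord4 val_inv tot_ram e0_def breaks
        \<open>b1 < b2\<close> \<open>odd b1\<close> \<open>e0 < b1\<close> \<open>b2 = b1 + 2 * e0\<close>] .
  then interpret quartic_breaks v2 \<sigma> \<pi> b1 b2 e0 .
  obtain \<alpha> where \<alpha>: "\<alpha> \<noteq> 0" "v2 \<alpha> = a" "rho \<alpha> \<noteq> 0" "v2 (rho \<alpha>) = a + 2 * e0"
    "\<sigma> (\<sigma> (mu \<alpha>)) = mu \<alpha>" "mu \<alpha> \<noteq> 0" "v2 (mu \<alpha>) = a + b1"
    "4 dvd a + b1 \<Longrightarrow> \<sigma> (mu \<alpha>) = mu \<alpha>"
    using exists_alpha[OF \<open>odd a\<close>] by blast
  have eqs: "\<sigma> \<alpha> + \<alpha> - rho \<alpha> = mu \<alpha>" "(\<sigma> ^^ 2) (mu \<alpha>) = \<sigma> (\<sigma> (mu \<alpha>))" "b2 - b1 = 2 * e0"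
    using b2_eq by (simp_all add: mu_def numeral_2_eq_2)
  show "?P a"
    unfolding Let_def
    by (intro conjI impI; rule exI[where x = \<alpha>], rule exI[where x = "rho \<alpha>"]) (use \<alpha> eqs in simp_all)
qed

end
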